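(* Let $X$ be a continuous real-valued random variable with compact support and fix an integer $K \ge 1$. For each $n > K$, let $Z = Z_n$ be the random variable produced by the SMOTE-$K$ procedure (described in the context) from an i.i.d. sample $X_1, \dots, X_n$ drawn from $X$. Then $Z$ converges to $X$ in mean as $n \to \infty$.
   Context: SMOTE-$K$ procedure: given a sample $X_1,\dots,X_n$ of real numbers and a rank $1 \le K \le n-1$: (1) choose an index $i$ uniformly at random from $\{1,\dots,n\}$; (2) find the $K$ nearest neighbors $X_{i,(1)}, \dots, X_{i,(K)}$ of $X_i$ among the other sample points $\{X_j: j\ne i\}$, where $X_{i,(k)}$ realizes the $k$-th smallest of the distances $|X_j - X_i|$, $j\neq i$; (3) choose one of them, $X_{i,(k)}$, uniformly at random; (4) draw $\lambda \sim U(0,1)$ independently; (5) output $Z = X_i + \lambda (X_{i,(k)} - X_i)$. The random variable $X$ appearing in the conclusion is taken to be the sample point $X_i$ from which $Z$ is generated (which has the distribution of $X$), so convergence in mean means $E[|Z - X_i|] \to 0$. *)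

theory Defs
  imports "HOL-Probability.Probability"
begin

text \<open>Ties are broken by index order
  (stable sort); the distance to the k-th nearest neighbour does not depend on
  the tie-breaking.\<close>
definition knn :: "nat \<Rightarrow> (nat \<Rightarrow> real) \<Rightarrow> nat \<Rightarrow> nat \<Rightarrow> nat" where
  "knn n x i k = sort_key (\<lambda>j. \<bar>x j - x i\<bar>) (filter (\<lambda>j. j \<noteq> i) [0..<n]) ! (k - 1)"

text \<open>Joint probability space of the SMOTE-K procedure with sample size n:
  the i.i.d. sample (X_0,...,X_{n-1}) with law mu, the uniform index i,
  the uniform neighbour rank k in {1..K}, and lambda ~ U(0,1), all independent.\<close>
definition smote_space ::
  "real measure \<Rightarrow> nat \<Rightarrow> nat \<Rightarrow> ((nat \<Rightarrow> real) \<times> nat \<times> nat \<times> real) measure" where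
  "smote_space \<mu> K n =
     PiM {..<n} (\<lambda>_. \<mu>) \<Otimes>\<^sub>M
       (measure_pmf (pmf_of_set {..<n}) \<Otimes>\<^sub>M
         (measure_pmf (pmf_of_set {1..K}) \<Otimes>\<^sub>M uniform_measure lborel {0..1}))"

definition smote_Z :: "nat \<Rightarrow> (nat \<Rightarrow> real) \<times> nat \<times> nat \<times> real \<Rightarrow> real" where
  "smote_Z n \<omega> = (case \<omega> of (x, i, k, l) \<Rightarrow> x i + l * (x (knn n x i k) - x i))"

definition smote_X :: "(nat \<Rightarrow> real) \<times> nat \<times> nat \<times> real \<Rightarrow> real" where
  "smote_X \<omega> = (case \<omega> of (x, i, k, l) \<Rightarrow> x i)"

end

theory Submission
  imports Defs "HOL-Real_Asymp.Real_Asymp"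
begin

text \<open>Fix a sample bounded by B and a scale \<epsilon> > 0, and cut [-B, B] into cells of width \<epsilon>.
  If the k-th nearest neighbour of X_i is farther away than \<epsilon>, the cell of X_i contains at
  most k sample points; hence at most k (2B/\<epsilon> + 1) indices i are that isolated, and the
  average k-th nearest neighbour distance is at most \<epsilon> + 2Bk (2B/\<epsilon> + 1)/n. Since
  |Z - X_i| never exceeds that distance, taking \<epsilon> = 1/sqrt n gives E|Z - X_i| \<rightarrow> 0.\<close>

lemma measurable_insort_key:
  fixes f :: "'a \<Rightarrow> 'b \<Rightarrow> 'c::linorder"
  assumes "\<And>a b. {\<omega> \<in> space M. f \<omega> a \<le> f \<omega> b} \<in> sets M"
  shows "(\<lambda>\<omega>. insort_key (f \<omega>) a xs) \<in> measurable M (count_space UNIV)"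
proof (induction xs)
  case (Cons b xs)
  have "(\<lambda>\<omega>. b # insort_key (f \<omega>) a xs) \<in> measurable M (count_space UNIV)"
    using measurable_compose[OF Cons measurable_count_space] .
  then have "(\<lambda>\<omega>. if f \<omega> a \<le> f \<omega> b then a # b # xs else b # insort_key (f \<omega>) a xs)
      \<in> measurable M (count_space UNIV)"
    by (intro measurable_If measurable_const assms) simp
  then show ?case by simp
qed simp

lemma measurable_sort_key:
  fixes f :: "'a \<Rightarrow> 'b::countable \<Rightarrow> 'c::linorder"
  assumes "\<And>a b. {\<omega> \<in> space M. f \<omega> a \<le> f \<omega> b} \<in> sets M"
  shows "(\<lambda>\<omega>. sort_key (f \<omega>) xs) \<in> measurable M (count_space UNIV)"
proof (induction xs)
  case (Cons a xs)
  have "(\<lambda>\<omega>. (\<lambda>ys \<omega>. insort_key (f \<omega>) a ys) (sort_key (f \<omega>) xs) \<omega>) \<in> measurable M (count_space UNIV)"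
    by (rule measurable_compose_countable'[where I=UNIV, OF measurable_insort_key[OF assms] Cons]) simp
  then show ?case by simp
qed simp

lemma borel_measurable_PiM_component:
  fixes j :: 'i
  assumes "sets \<mu> = sets borel"
  shows "(\<lambda>x. x j :: real) \<in> borel_measurable (PiM I (\<lambda>_. \<mu>))"
proof (cases "j \<in> I")
  case True
  have "(\<lambda>x. x j) \<in> measurable (PiM I (\<lambda>_. \<mu>)) \<mu>"
    using measurable_component_singleton[OF True, of "\<lambda>_. \<mu>"] by simp
  then show ?thesis using measurable_cong_sets[OF refl assms] by blast
next
  case False
  have "(\<lambda>x. x j) \<in> borel_measurable (PiM I (\<lambda>_. \<mu>)) \<longleftrightarrow>
      (\<lambda>_. undefined :: real) \<in> borel_measurable (PiM I (\<lambda>_. \<mu>))"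
    by (rule measurable_cong) (metis space_PiM PiE_arb False)
  then show ?thesis by (simp only: measurable_const space_borel UNIV_I)
qed

lemma measurable_knn:
  assumes "sets \<mu> = sets borel"
  shows "(\<lambda>x. knn n x i k) \<in> measurable (PiM I (\<lambda>_. \<mu>)) (count_space UNIV)"
  unfolding knn_def
  by (rule measurable_compose[OF measurable_sort_key measurable_count_space])
    (intro borel_measurable_le borel_measurable_abs borel_measurable_diff
      borel_measurable_PiM_component[OF assms])

lemma borel_measurable_smote_diff:
  assumes "sets \<mu> = sets borel"
  shows "(\<lambda>\<omega>. smote_Z n \<omega> - smote_X \<omega>) \<in> borel_measurable (smote_space \<mu> K n)"
proof -
  let ?S = "smote_space \<mu> K n"
  have sample: "(\<lambda>\<omega>. fst \<omega> j) \<in> borel_measurable ?S" for j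
    unfolding smote_space_def
    by (rule measurable_compose[OF measurable_fst borel_measurable_PiM_component[OF assms]])
  have neighbour: "(\<lambda>\<omega>. knn n (fst \<omega>) i k) \<in> measurable ?S (count_space UNIV)" for i k
    unfolding smote_space_def by (rule measurable_compose[OF measurable_fst measurable_knn[OF assms]])
  have index: "(\<lambda>\<omega>. fst (snd \<omega>)) \<in> measurable ?S (count_space UNIV)"
    and rank: "(\<lambda>\<omega>. fst (snd (snd \<omega>))) \<in> measurable ?S (count_space UNIV)"
    unfolding smote_space_def by (simp_all add: measurable_pmf_measure2[symmetric])
  have "(\<lambda>\<omega>. fst \<omega> (knn n (fst \<omega>) i k)) \<in> borel_measurable ?S" for i k
    by (rule measurable_compose_countable'[OF sample neighbour]) simp
  then have "(\<lambda>\<omega>. snd (snd (snd \<omega>)) * (fst \<omega> (knn n (fst \<omega>) i k) - fst \<omega> i)) \<in> borel_measurable ?S"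
    for i k
    using sample unfolding smote_space_def by measurable
  then have "(\<lambda>\<omega>. snd (snd (snd \<omega>)) *
      (fst \<omega> (knn n (fst \<omega>) (fst (snd \<omega>)) k) - fst \<omega> (fst (snd \<omega>)))) \<in> borel_measurable ?S" for k
    by (rule measurable_compose_countable'[OF _ index]) simp
  then have "(\<lambda>\<omega>. snd (snd (snd \<omega>)) * (fst \<omega> (knn n (fst \<omega>) (fst (snd \<omega>)) (fst (snd (snd \<omega>))))
      - fst \<omega> (fst (snd \<omega>)))) \<in> borel_measurable ?S"
    by (rule measurable_compose_countable'[OF _ rank]) simp
  moreover have "(\<lambda>\<omega>. smote_Z n \<omega> - smote_X \<omega>) = (\<lambda>\<omega>. snd (snd (snd \<omega>)) *
      (fst \<omega> (knn n (fst \<omega>) (fst (snd \<omega>)) (fst (snd (snd \<omega>)))) - fst \<omega> (fst (snd \<omega>))))"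
    by (simp add: smote_Z_def smote_X_def case_prod_beta)
  ultimately show ?thesis by simp
qed

definition knn_dist :: "nat \<Rightarrow> (nat \<Rightarrow> real) \<Rightarrow> nat \<Rightarrow> nat \<Rightarrow> real" where
  "knn_dist n x i k = \<bar>x (knn n x i k) - x i\<bar>"

lemma length_sort_key_filter_neq:
  assumes "i < n"
  shows "length (sort_key f (filter (\<lambda>j. j \<noteq> i) [0..<n])) = n - 1"
proof -
  have "set (filter (\<lambda>j. j \<noteq> i) [0..<n]) = {0..<n} - {i}" by auto
  then have "length (filter (\<lambda>j. j \<noteq> i) [0..<n]) = card ({0..<n} - {i})"
    by (metis distinct_card distinct_filter distinct_upt)
  with assms show ?thesis by simp
qed

lemma knn_less:
  assumes "i < n" "1 \<le> k" "k < n"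
  shows "knn n x i k < n"
proof -
  let ?S = "sort_key (\<lambda>j. \<bar>x j - x i\<bar>) (filter (\<lambda>j. j \<noteq> i) [0..<n])"
  have "?S ! (k - 1) \<in> set ?S"
    using assms length_sort_key_filter_neq[OF assms(1)] by (intro nth_mem) simp
  then show ?thesis unfolding knn_def by simp
qed

lemma card_close_less_knn:
  assumes "i < n" "1 \<le> k" "k < n" "\<epsilon> < knn_dist n x i k"
  shows "card {j. j < n \<and> j \<noteq> i \<and> \<bar>x j - x i\<bar> \<le> \<epsilon>} < k"
proof -
  define f where "f j = \<bar>x j - x i\<bar>" for j
  define S where "S = sort_key f (filter (\<lambda>j. j \<noteq> i) [0..<n])"
  have set_S: "set S = {0..<n} - {i}" and length_S: "length S = n - 1"
    using length_sort_key_filter_neq[OF assms(1)] unfolding S_def by auto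
  have knn_S: "knn n x i k = S ! (k - 1)" unfolding knn_def S_def f_def ..
  have "{j. j < n \<and> j \<noteq> i \<and> f j \<le> \<epsilon>} \<subseteq> set (take (k - 1) S)"
  proof
    fix j assume j: "j \<in> {j. j < n \<and> j \<noteq> i \<and> f j \<le> \<epsilon>}"
    then have "j \<in> set S" using set_S by simp
    then obtain p where p: "p < length S" "S ! p = j" by (auto simp: in_set_conv_nth)
    have "p < k - 1"
    proof (rule ccontr)
      assume "\<not> p < k - 1"
      then have "f (S ! (k - 1)) \<le> f (S ! p)"
        using sorted_nth_mono[of "map f S" "k - 1" p] p by (simp add: S_def)
      then show False using j p assms(4) knn_S by (simp add: knn_dist_def f_def)
    qed
    then show "j \<in> set (take (k - 1) S)" using p by (auto simp: in_set_conv_nth)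
  qed
  then have "card {j. j < n \<and> j \<noteq> i \<and> f j \<le> \<epsilon>} \<le> k - 1"
    by (metis List.finite_set card_length card_mono length_take min.boundedE order_trans)
  then show ?thesis using assms(2) unfolding f_def by linarith
qed

lemma card_le_card_image_mult:
  assumes "finite A" "\<And>a. a \<in> A \<Longrightarrow> card {b \<in> A. f b = f a} \<le> m"
  shows "card A \<le> card (f ` A) * m"
proof -
  have "A = (\<Union>v\<in>f ` A. {a \<in> A. f a = v})" by auto
  then have "card A \<le> (\<Sum>v\<in>f ` A. card {a \<in> A. f a = v})"
    by (metis assms(1) card_UN_le finite_imageI)
  also have "\<dots> \<le> (\<Sum>v\<in>f ` A. m)" using assms(2) by (intro sum_mono) auto
  finally show ?thesis by simp
qed

lemma card_grid_cells_le:
  assumes "\<forall>i\<in>A. \<bar>x i\<bar> \<le> B" "0 \<le> B" "\<epsilon> > 0"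
  shows "real (card ((\<lambda>i. \<lfloor>(x i + B) / \<epsilon>\<rfloor>) ` A)) \<le> 2 * B / \<epsilon> + 1"
proof -
  have "(\<lambda>i. \<lfloor>(x i + B) / \<epsilon>\<rfloor>) ` A \<subseteq> {0..\<lfloor>2 * B / \<epsilon>\<rfloor>}"
  proof
    fix v assume "v \<in> (\<lambda>i. \<lfloor>(x i + B) / \<epsilon>\<rfloor>) ` A"
    then obtain i where "i \<in> A" "v = \<lfloor>(x i + B) / \<epsilon>\<rfloor>" by auto
    moreover have "0 \<le> (x i + B) / \<epsilon>" "(x i + B) / \<epsilon> \<le> 2 * B / \<epsilon>"
      using assms(1,3) \<open>i \<in> A\<close> by (auto simp: abs_le_iff intro!: divide_right_mono)
    ultimately show "v \<in> {0..\<lfloor>2 * B / \<epsilon>\<rfloor>}" by (simp add: floor_mono)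
  qed
  then have "card ((\<lambda>i. \<lfloor>(x i + B) / \<epsilon>\<rfloor>) ` A) \<le> nat (\<lfloor>2 * B / \<epsilon>\<rfloor> + 1)"
    using card_mono[OF finite_atLeastAtMost_int] by (metis card_atLeastAtMost_int diff_zero)
  then have "real (card ((\<lambda>i. \<lfloor>(x i + B) / \<epsilon>\<rfloor>) ` A)) \<le> real (nat (\<lfloor>2 * B / \<epsilon>\<rfloor> + 1))"
    by (rule of_nat_mono)
  also have "\<dots> = of_int \<lfloor>2 * B / \<epsilon>\<rfloor> + 1"
    using assms(2,3) by simp
  also have "\<dots> \<le> 2 * B / \<epsilon> + 1" by simp
  finally show ?thesis .
qed

lemma card_far_knn_le:
  assumes "\<forall>j<n. \<bar>x j\<bar> \<le> B" "\<epsilon> > 0" "1 \<le> k" "k < n"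
  shows "real (card {i. i < n \<and> \<epsilon> < knn_dist n x i k}) \<le> real k * (2 * B / \<epsilon> + 1)"
proof -
  define far where "far = {i. i < n \<and> \<epsilon> < knn_dist n x i k}"
  define close where "close i = {j. j < n \<and> j \<noteq> i \<and> \<bar>x j - x i\<bar> \<le> \<epsilon>}" for i
  define cell where "cell j = \<lfloor>(x j + B) / \<epsilon>\<rfloor>" for j
  have B: "0 \<le> B" using assms(4) spec[OF assms(1), of 0] by force
  have "card {j \<in> far. cell j = cell i} \<le> k" if "i \<in> far" for i
  proof -
    have "\<bar>x j - x i\<bar> \<le> \<epsilon>" if "cell j = cell i" for j
    proof -
      have "\<bar>(x j + B) / \<epsilon> - (x i + B) / \<epsilon>\<bar> < 1"
        using that unfolding cell_def by linarith
      then show ?thesis using assms(2) by (simp add: diff_divide_distrib[symmetric])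
    qed
    then have "{j \<in> far. cell j = cell i} \<subseteq> insert i (close i)"
      unfolding far_def close_def by auto
    then have "card {j \<in> far. cell j = cell i} \<le> card (insert i (close i))"
      by (rule card_mono[rotated]) (simp add: close_def)
    also have "\<dots> \<le> Suc (card (close i))"
      by (simp add: card_insert_if close_def)
    also have "card (close i) < k"
      using that assms(3,4) unfolding close_def by (intro card_close_less_knn) (auto simp: far_def)
    finally show ?thesis by simp
  qed
  then have "card far \<le> card (cell ` far) * k"
    by (intro card_le_card_image_mult) (auto simp: far_def)
  then have "real (card far) \<le> real (card (cell ` far)) * real k"
    by (metis of_nat_mono of_nat_mult)
  also have "\<dots> \<le> (2 * B / \<epsilon> + 1) * real k"
    using card_grid_cells_le[of far x B \<epsilon>] assms(1,2) B unfolding cell_def far_def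
    by (intro mult_right_mono) auto
  finally show ?thesis by (simp add: far_def mult.commute)
qed

lemma sum_knn_dist_le:
  assumes "\<forall>j<n. \<bar>x j\<bar> \<le> B" "\<epsilon> > 0" "1 \<le> k" "k < n"
  shows "(\<Sum>i<n. knn_dist n x i k) \<le> n * \<epsilon> + 2 * B * k * (2 * B / \<epsilon> + 1)"
proof -
  define far where "far = {i. i < n \<and> \<epsilon> < knn_dist n x i k}"
  have B: "0 \<le> B" using assms(4) spec[OF assms(1), of 0] by force
  have "knn_dist n x i k \<le> \<epsilon> + (if i \<in> far then 2 * B else 0)" if "i < n" for i
  proof -
    have "\<bar>x (knn n x i k)\<bar> \<le> B" "\<bar>x i\<bar> \<le> B"
      using assms(1) knn_less[OF that assms(3,4)] that by auto
    then have "knn_dist n x i k \<le> 2 * B" unfolding knn_dist_def by arith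
    then show ?thesis using that assms(2) unfolding far_def by auto
  qed
  then have "(\<Sum>i<n. knn_dist n x i k) \<le> (\<Sum>i<n. \<epsilon> + (if i \<in> far then 2 * B else 0))"
    by (intro sum_mono) auto
  also have "\<dots> = n * \<epsilon> + 2 * B * card far"
  proof -
    have "{..<n} \<inter> far = far" by (auto simp: far_def)
    then show ?thesis by (simp add: sum.distrib sum.If_cases)
  qed
  also have "\<dots> \<le> n * \<epsilon> + 2 * B * (k * (2 * B / \<epsilon> + 1))"
    using card_far_knn_le[OF assms] B unfolding far_def by (intro add_left_mono mult_left_mono) auto
  finally show ?thesis by (simp add: mult.assoc)
qed

lemma mean_knn_dist_le:
  assumes "\<forall>j<n. \<bar>x j\<bar> \<le> B" "\<epsilon> > 0" "1 \<le> K" "K < n"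
  shows "(\<Sum>i<n. (\<Sum>k=1..K. knn_dist n x i k) / K) / n \<le> \<epsilon> + 2 * B * K * (2 * B / \<epsilon> + 1) / n"
proof -
  have B: "0 \<le> B" using assms(4) spec[OF assms(1), of 0] by force
  have "(\<Sum>i<n. (\<Sum>k=1..K. knn_dist n x i k) / K) = (\<Sum>k=1..K. \<Sum>i<n. knn_dist n x i k) / K"
    by (simp add: sum_divide_distrib[symmetric]) (rule disjI2, rule sum.swap)
  also have "\<dots> \<le> (\<Sum>k=1..K. n * \<epsilon> + 2 * B * K * (2 * B / \<epsilon> + 1)) / K"
  proof (intro divide_right_mono sum_mono)
    fix k assume k: "k \<in> {1..K}"
    have "(\<Sum>i<n. knn_dist n x i k) \<le> n * \<epsilon> + 2 * B * k * (2 * B / \<epsilon> + 1)"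
      using k assms by (intro sum_knn_dist_le) auto
    also have "\<dots> \<le> n * \<epsilon> + 2 * B * K * (2 * B / \<epsilon> + 1)"
      using k B assms(2) by (intro add_left_mono mult_right_mono mult_left_mono) auto
    finally show "(\<Sum>i<n. knn_dist n x i k) \<le> n * \<epsilon> + 2 * B * K * (2 * B / \<epsilon> + 1)" .
  qed simp
  also have "\<dots> = n * \<epsilon> + 2 * B * K * (2 * B / \<epsilon> + 1)" using assms(3) by simp
  finally have "(\<Sum>i<n. (\<Sum>k=1..K. knn_dist n x i k) / K) / n
      \<le> (n * \<epsilon> + 2 * B * K * (2 * B / \<epsilon> + 1)) / n"
    by (rule divide_right_mono) simp
  also have "\<dots> = \<epsilon> + 2 * B * K * (2 * B / \<epsilon> + 1) / n"
    using assms(4) by (simp add: add_divide_distrib)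
  finally show ?thesis .
qed

lemma nn_integral_pmf_of_set_pair:
  assumes "finite S" "S \<noteq> {}" "sigma_finite_measure N"
    and "f \<in> borel_measurable (measure_pmf (pmf_of_set S) \<Otimes>\<^sub>M N)"
  shows "integral\<^sup>N (measure_pmf (pmf_of_set S) \<Otimes>\<^sub>M N) f = (\<Sum>s\<in>S. \<integral>\<^sup>+y. f (s, y) \<partial>N) / card S"
  using sigma_finite_measure.nn_integral_fst[OF assms(3,4)] assms(1,2)
  by (simp add: nn_integral_pmf_of_set)

lemma prob_space_uniform_unit_interval: "prob_space (uniform_measure lborel {0..1::real})"
  by (intro prob_space_uniform_measure) auto

lemma nn_integral_smote_space:
  assumes "f \<in> borel_measurable (smote_space \<mu> K n)" "1 \<le> K" "0 < n"
  shows "integral\<^sup>N (smote_space \<mu> K n) f =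
    (\<integral>\<^sup>+x. (\<Sum>i<n. (\<Sum>k=1..K. \<integral>\<^sup>+l. f (x, i, k, l) \<partial>uniform_measure lborel {0..1}) / K) / n
      \<partial>PiM {..<n} (\<lambda>_. \<mu>))"
proof -
  let ?U = "uniform_measure lborel {0..1::real}"
  let ?R = "measure_pmf (pmf_of_set {..<n}) \<Otimes>\<^sub>M (measure_pmf (pmf_of_set {1..K}) \<Otimes>\<^sub>M ?U)"
  have U: "sigma_finite_measure ?U"
    by (rule prob_space_imp_sigma_finite[OF prob_space_uniform_unit_interval])
  have KU: "sigma_finite_measure (measure_pmf (pmf_of_set {1..K}) \<Otimes>\<^sub>M ?U)"
    and R: "sigma_finite_measure ?R"
    by (intro prob_space_imp_sigma_finite prob_space_pair prob_space_measure_pmf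
        prob_space_uniform_unit_interval)+
  have f: "f \<in> borel_measurable (PiM {..<n} (\<lambda>_. \<mu>) \<Otimes>\<^sub>M ?R)"
    using assms(1) unfolding smote_space_def .
  have "integral\<^sup>N (smote_space \<mu> K n) f = (\<integral>\<^sup>+x. \<integral>\<^sup>+y. f (x, y) \<partial>?R \<partial>PiM {..<n} (\<lambda>_. \<mu>))"
    using sigma_finite_measure.nn_integral_fst[OF R f] unfolding smote_space_def by simp
  also have "\<dots> = (\<integral>\<^sup>+x. (\<Sum>i<n. (\<Sum>k=1..K. \<integral>\<^sup>+l. f (x, i, k, l) \<partial>?U) / K) / n
      \<partial>PiM {..<n} (\<lambda>_. \<mu>))"
  proof (rule nn_integral_cong)
    fix x assume "x \<in> space (PiM {..<n} (\<lambda>_. \<mu>))"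
    from measurable_Pair2[OF f this]
    have fx: "(\<lambda>y. f (x, y)) \<in> borel_measurable ?R" .
    have "(\<integral>\<^sup>+y. f (x, y) \<partial>?R) =
        (\<Sum>i<n. \<integral>\<^sup>+z. f (x, i, z) \<partial>(measure_pmf (pmf_of_set {1..K}) \<Otimes>\<^sub>M ?U)) / n"
      using nn_integral_pmf_of_set_pair[OF _ _ KU fx] assms(3) by (simp add: lessThan_empty_iff)
    also have "\<dots> = (\<Sum>i<n. (\<Sum>k=1..K. \<integral>\<^sup>+l. f (x, i, k, l) \<partial>?U) / K) / n"
      using nn_integral_pmf_of_set_pair[OF _ _ U measurable_Pair2[OF fx]] assms(2) by auto
    finally show "(\<integral>\<^sup>+y. f (x, y) \<partial>?R) = (\<Sum>i<n. (\<Sum>k=1..K. \<integral>\<^sup>+l. f (x, i, k, l) \<partial>?U) / K) / n" .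
  qed
  finally show ?thesis .
qed

lemma nn_integral_abs_smote_diff_le:
  "(\<integral>\<^sup>+l. ennreal \<bar>smote_Z n (x, i, k, l) - smote_X (x, i, k, l)\<bar> \<partial>uniform_measure lborel {0..1})
    \<le> ennreal (knn_dist n x i k)"
proof -
  let ?U = "uniform_measure lborel {0..1::real}"
  have "AE l in ?U. l \<in> {0..1}" by (rule AE_uniform_measureI) auto
  then have "AE l in ?U. ennreal \<bar>smote_Z n (x, i, k, l) - smote_X (x, i, k, l)\<bar> \<le> ennreal (knn_dist n x i k)"
    by eventually_elim
      (auto simp: smote_Z_def smote_X_def knn_dist_def abs_mult intro!: ennreal_leI mult_left_le_one_le)
  then have "(\<integral>\<^sup>+l. ennreal \<bar>smote_Z n (x, i, k, l) - smote_X (x, i, k, l)\<bar> \<partial>?U)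
      \<le> (\<integral>\<^sup>+l. ennreal (knn_dist n x i k) \<partial>?U)"
    by (rule nn_integral_mono_AE)
  also have "\<dots> = ennreal (knn_dist n x i k)"
    using prob_space.emeasure_space_1[OF prob_space_uniform_unit_interval] by simp
  finally show ?thesis .
qed

lemma nn_integral_smote_diff_le:
  assumes "prob_space \<mu>" "sets \<mu> = sets borel" "AE y in \<mu>. \<bar>y\<bar> \<le> B"
    and "\<epsilon> > 0" "1 \<le> K" "K < n"
  shows "(\<integral>\<^sup>+\<omega>. ennreal \<bar>smote_Z n \<omega> - smote_X \<omega>\<bar> \<partial>smote_space \<mu> K n)
      \<le> ennreal (\<epsilon> + 2 * B * K * (2 * B / \<epsilon> + 1) / n)"
proof -
  let ?M = "PiM {..<n} (\<lambda>_. \<mu>)"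
  let ?avg = "\<lambda>x. (\<Sum>i<n. (\<Sum>k=1..K. \<integral>\<^sup>+l. ennreal \<bar>smote_Z n (x, i, k, l) - smote_X (x, i, k, l)\<bar>
    \<partial>uniform_measure lborel {0..1}) / K) / n"
  let ?bound = "\<epsilon> + 2 * B * K * (2 * B / \<epsilon> + 1) / n"
  have avg_le: "?avg x \<le> ennreal ((\<Sum>i<n. (\<Sum>k=1..K. knn_dist n x i k) / K) / n)" for x
  proof -
    have "?avg x \<le> (\<Sum>i<n. (\<Sum>k=1..K. ennreal (knn_dist n x i k)) / K) / n"
      by (intro divide_right_mono_ennreal sum_mono nn_integral_abs_smote_diff_le)
    also have "\<dots> = ennreal ((\<Sum>i<n. (\<Sum>k=1..K. knn_dist n x i k) / K) / n)"
      using assms(5,6)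
      by (simp add: knn_dist_def sum_nonneg ennreal_of_nat_eq_real_of_nat divide_ennreal)
    finally show ?thesis .
  qed
  have "AE x in ?M. \<forall>j\<in>{..<n}. \<bar>x j\<bar> \<le> B"
    using assms(1,3) by (intro eventually_ball_finite ballI AE_PiM_component) auto
  then have "AE x in ?M. ?avg x \<le> ennreal ?bound"
    by eventually_elim
      (rule order_trans[OF avg_le ennreal_leI], rule mean_knn_dist_le, use assms(4-6) in auto)
  then have "(\<integral>\<^sup>+x. ?avg x \<partial>?M) \<le> (\<integral>\<^sup>+x. ennreal ?bound \<partial>?M)"
    by (rule nn_integral_mono_AE)
  also have "\<dots> = ennreal ?bound"
    using prob_space.emeasure_space_1[OF prob_space_PiM[of "{..<n}" "\<lambda>_. \<mu>"]] assms(1) by simp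
  finally show ?thesis
    using assms(5,6) borel_measurable_smote_diff[OF assms(2)]
    by (subst nn_integral_smote_space) auto
qed

lemma AE_abs_le_of_compact_support:
  assumes "prob_space \<mu>" "sets \<mu> = sets borel" "compact C" "emeasure \<mu> C = 1"
  obtains B where "AE y in \<mu>. \<bar>y :: real\<bar> \<le> B"
proof -
  obtain B where B: "\<forall>y\<in>C. \<bar>y\<bar> \<le> B"
    using compact_imp_bounded[OF assms(3)] by (auto simp: bounded_iff)
  have "C \<in> sets \<mu>" using assms(2) compact_imp_closed[OF assms(3)] by simp
  moreover have "measure \<mu> C = 1" using assms(4) by (simp add: measure_def)
  ultimately have "AE y in \<mu>. y \<in> C" using prob_space.AE_in_set_eq_1[OF assms(1)] by simp
  then have "AE y in \<mu>. \<bar>y\<bar> \<le> B" by eventually_elim (use B in auto)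
  then show ?thesis by (rule that)
qed

theorem corollary3:
  fixes \<mu> :: "real measure" and K :: nat
  assumes "prob_space \<mu>"
    and "sets \<mu> = sets borel"
    and "\<forall>x. measure \<mu> {x} = 0"
    and "\<exists>C. compact C \<and> emeasure \<mu> C = 1"
    and "K \<ge> 1"
  shows "(\<forall>n>K. (\<lambda>\<omega>. smote_Z n \<omega> - smote_X \<omega>) \<in> borel_measurable (smote_space \<mu> K n))
     \<and> (\<lambda>n. \<integral>\<^sup>+\<omega>. ennreal \<bar>smote_Z n \<omega> - smote_X \<omega>\<bar> \<partial>smote_space \<mu> K n) \<longlonglongrightarrow> 0"
proof
  show "\<forall>n>K. (\<lambda>\<omega>. smote_Z n \<omega> - smote_X \<omega>) \<in> borel_measurable (smote_space \<mu> K n)"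
    using borel_measurable_smote_diff[OF assms(2)] by blast
  obtain B where B: "AE y in \<mu>. \<bar>y\<bar> \<le> B"
    using assms(4) AE_abs_le_of_compact_support[OF assms(1,2)] by blast
  define bound where "bound n = 1 / sqrt n + 2 * B * K * (2 * B / (1 / sqrt n) + 1) / n" for n :: nat
  have "bound \<longlonglongrightarrow> 0" unfolding bound_def by real_asymp
  from tendsto_ennrealI[OF this] have lim: "(\<lambda>n. ennreal (bound n)) \<longlonglongrightarrow> 0"
    by (simp only: ennreal_0)
  have bounded: "(\<integral>\<^sup>+\<omega>. ennreal \<bar>smote_Z n \<omega> - smote_X \<omega>\<bar> \<partial>smote_space \<mu> K n) \<le> ennreal (bound n)"
    if "K < n" for n
    unfolding bound_def by (rule nn_integral_smote_diff_le[OF assms(1,2) B]) (use assms(5) that in auto)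
  have "\<forall>\<^sub>F n in sequentially.
      (\<integral>\<^sup>+\<omega>. ennreal \<bar>smote_Z n \<omega> - smote_X \<omega>\<bar> \<partial>smote_space \<mu> K n) \<le> ennreal (bound n)"
    by (rule eventually_mono[OF eventually_gt_at_top[of K] bounded])
  from tendsto_sandwich[OF _ this tendsto_const lim]
  show "(\<lambda>n. \<integral>\<^sup>+\<omega>. ennreal \<bar>smote_Z n \<omega> - smote_X \<omega>\<bar> \<partial>smote_space \<mu> K n) \<longlonglongrightarrow> 0"
    by simp
qed

end
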